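(* Let $\mu_1<\mu_2$ be real thresholds and let $\eta:\mathbb{R}^n\to\mathbb{R}^n$ be the element-wise clipping operator defined by $\eta(\boldsymbol{u})_j=\mu_1$ if $u_j\le\mu_1$, $\eta(\boldsymbol{u})_j=u_j$ if $u_j\in(\mu_1,\mu_2)$, and $\eta(\boldsymbol{u})_j=\mu_2$ if $u_j\ge\mu_2$. Let $G$ be a group and $\{\boldsymbol{T}_g\}_{g\in G}$ a family of maps $\mathbb{R}^n\to\mathbb{R}^n$ such that $\boldsymbol{T}_g(\eta(\boldsymbol{x}))=\eta(\boldsymbol{T}_g\boldsymbol{x})$ for all $g\in G$ and all $\boldsymbol{x}\in\mathbb{R}^n$. Suppose that $\mathcal{X}\subseteq\mathbb{R}^n$ cannot be identified from $\mathcal{Y}=\eta(\mathcal{X})$. Then $\mathcal{X}$ cannot be identified from the collection of measurement sets $\mathcal{Y}_g=\eta(\boldsymbol{T}_g\mathcal{X})$, $g\in G$.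
   Context: A signal set $\mathcal{X}$ (within a considered class of candidate sets) is said to be identifiable from given measurement data if no other candidate set $\mathcal{X}'\neq\mathcal{X}$ produces the same measurement data. Thus "$\mathcal{X}$ cannot be identified from $\eta(\mathcal{X})$" means there is a candidate set $\mathcal{X}'\neq\mathcal{X}$ with $\eta(\mathcal{X}')=\eta(\mathcal{X})$, and "$\mathcal{X}$ cannot be identified from the sets $\mathcal{Y}_g$, $g\in G$" means there is a candidate set $\mathcal{X}'\neq\mathcal{X}$ with $\eta(\boldsymbol{T}_g\mathcal{X}')=\eta(\boldsymbol{T}_g\mathcal{X})$ for all $g\in G$. Here $\boldsymbol{T}_g\mathcal{X}=\{\boldsymbol{T}_g\boldsymbol{x}:\boldsymbol{x}\in\mathcal{X}\}$ and $\eta(\mathcal{X})=\{\eta(\boldsymbol{x}):\boldsymbol{x}\in\mathcal{X}\}$. *)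

theory Defs
  imports "HOL-Analysis.Analysis" "HOL-Algebra.Group"
begin

definition clip_scalar :: "real \<Rightarrow> real \<Rightarrow> real \<Rightarrow> real" where
  "clip_scalar mu1 mu2 u = (if u \<le> mu1 then mu1 else if u \<ge> mu2 then mu2 else u)"

definition clip :: "real \<Rightarrow> real \<Rightarrow> real ^ 'n \<Rightarrow> real ^ 'n" where
  "clip mu1 mu2 u = (\<chi> j. clip_scalar mu1 mu2 (u $ j))"

end

theory Submission
  imports Defs
begin

lemma image_image_eq_if_commute:
  assumes "\<And>x. h (f x) = f (h x)"
    and "f ` A = f ` B"
  shows "f ` h ` A = f ` h ` B"
proof -
  have "f ` h ` Y = h ` f ` Y" for Y
    using assms(1) by (simp add: image_image)
  then show ?thesis
    using assms(2) by simp
qed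

theorem proposition1:
  fixes mu1 mu2 :: real
    and G :: "('g, 'b) monoid_scheme"
    and T :: "'g \<Rightarrow> real ^ 'n \<Rightarrow> real ^ 'n"
    and \<C> :: "(real ^ 'n) set set"
    and X :: "(real ^ 'n) set"
  assumes "mu1 < mu2"
    and "group G"
    and "\<And>g x. g \<in> carrier G \<Longrightarrow> T g (clip mu1 mu2 x) = clip mu1 mu2 (T g x)"
    and "X \<in> \<C>"
    and "\<exists>X'\<in>\<C>. X' \<noteq> X \<and> clip mu1 mu2 ` X' = clip mu1 mu2 ` X"
  shows "\<exists>X'\<in>\<C>. X' \<noteq> X \<and>
           (\<forall>g\<in>carrier G. clip mu1 mu2 ` (T g ` X') = clip mu1 mu2 ` (T g ` X))"
proof -
  obtain X' where "X' \<in> \<C>" "X' \<noteq> X" and same_clip: "clip mu1 mu2 ` X' = clip mu1 mu2 ` X"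
    using assms(5) by blast
  show ?thesis
  proof (intro bexI conjI ballI)
    fix g
    assume "g \<in> carrier G"
    show "clip mu1 mu2 ` T g ` X' = clip mu1 mu2 ` T g ` X"
      using assms(3)[OF \<open>g \<in> carrier G\<close>] same_clip by (rule image_image_eq_if_commute)
  qed fact+
qed

end
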